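(* Let $R$ be a unital ring with involution, let $a\in R$ be core invertible, and let $b\in R$. Then the following conditions are equivalent: (1) $a\overset{\circledast}{\leq} b$; (2) there exists $p\in R$ with $p^2=p=p^{*}$ such that $a=pb$, $ap=bp$ and $aR=pR$; (3) there exists $p\in R$ with $p^2=p=p^{*}$ such that $a=pb$ and $ap=bp$; (4) there exists $p\in R$ with $p^2=p=p^{*}$ such that, writing $x_{11}=pxp$, $x_{12}=px(1-p)$, $x_{21}=(1-p)xp$, $x_{22}=(1-p)x(1-p)$ for $x\in R$, one has $a_{21}=0$, $a_{22}=0$, $b_{11}=a_{11}$, $b_{12}=a_{12}$ and $b_{21}=0$ (i.e. in matrix form relative to $p$, $a=\begin{pmatrix}a_1&a_2\\0&0\end{pmatrix}$ and $b=\begin{pmatrix}a_1&a_2\\0&b_4\end{pmatrix}$).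
   Context: $R$ is a ring with identity and an involution $x\mapsto x^{*}$. An element $a\in R$ is core invertible if there exists $x\in R$ with $axa=a$, $xR=aR$ and $Rx=Ra^{*}$; such $x$ is unique, called the core inverse of $a$ and denoted $a^{\circledast}$. For $a$ core invertible and $b\in R$, $a\overset{\circledast}{\leq} b$ means $a^{\circledast}a=a^{\circledast}b$ and $aa^{\circledast}=ba^{\circledast}$. $aR=\{ax:x\in R\}$. *)

theory Defs
  imports Main
begin

definition involution :: "('a::ring_1 \<Rightarrow> 'a) \<Rightarrow> bool" where
  "involution s \<longleftrightarrow> (\<forall>x y. s (x + y) = s x + s y) \<and> (\<forall>x y. s (x * y) = s y * s x)
     \<and> (\<forall>x. s (s x) = x)"

definition rideal :: "'a::ring_1 \<Rightarrow> 'a set" where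
  "rideal a = {a * x | x. True}"

definition lideal :: "'a::ring_1 \<Rightarrow> 'a set" where
  "lideal a = {x * a | x. True}"

definition is_core_inverse :: "('a::ring_1 \<Rightarrow> 'a) \<Rightarrow> 'a \<Rightarrow> 'a \<Rightarrow> bool" where
  "is_core_inverse s a x \<longleftrightarrow> a * x * a = a \<and> rideal x = rideal a \<and> lideal x = lideal (s a)"

definition core_invertible :: "('a::ring_1 \<Rightarrow> 'a) \<Rightarrow> 'a \<Rightarrow> bool" where
  "core_invertible s a \<longleftrightarrow> (\<exists>x. is_core_inverse s a x)"

definition core_inv :: "('a::ring_1 \<Rightarrow> 'a) \<Rightarrow> 'a \<Rightarrow> 'a" where
  "core_inv s a = (THE x. is_core_inverse s a x)"

definition core_le :: "('a::ring_1 \<Rightarrow> 'a) \<Rightarrow> 'a \<Rightarrow> 'a \<Rightarrow> bool" where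
  "core_le s a b \<longleftrightarrow> core_inv s a * a = core_inv s a * b \<and> a * core_inv s a = b * core_inv s a"

end

theory Submission
  imports Defs
begin

text \<open>If \<open>x\<close> is a core inverse of \<open>a\<close>, then \<open>p = a x\<close> is a Hermitian idempotent with
  \<open>pR = aR\<close>, and \<open>x = p x = x p\<close>. The relation \<open>a \<le> b\<close> says \<open>x a = x b\<close> and \<open>a x = b x\<close>;
  multiplying by \<open>a\<close> on the left turns the first into \<open>a = p b\<close>, and since \<open>a \<in> xR\<close> the
  second gives \<open>a p = b p\<close>. Conversely, from \<open>a = p b\<close> and \<open>a p = b p\<close> with \<open>p\<close> a Hermitian
  idempotent, \<open>x \<in> aR\<close> gives \<open>p x = x\<close> and \<open>x \<in> R a\<^sup>*\<close> with \<open>a\<^sup>* = b\<^sup>* p\<close> gives \<open>x p = x\<close>,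
  whence \<open>x a = x b\<close> and \<open>a x = b x\<close>. The matrix form (4) is the Peirce decomposition of the
  two conditions \<open>a = p b\<close>, \<open>a p = b p\<close> relative to \<open>p\<close>.\<close>

lemma involution_mult: "involution s \<Longrightarrow> s (x * y) = s y * s x"
  by (simp add: involution_def)

lemma involution_involutive: "involution s \<Longrightarrow> s (s x) = x"
  by (simp add: involution_def)

lemma mem_rideal_iff: "y \<in> rideal a \<longleftrightarrow> (\<exists>z. y = a * z)"
  by (simp add: rideal_def)

lemma mem_lideal_iff: "y \<in> lideal a \<longleftrightarrow> (\<exists>z. y = z * a)"
  by (simp add: lideal_def)

lemma rideal_self: "a \<in> rideal a"
  unfolding mem_rideal_iff by (metis mult_1_right)

lemma lideal_self: "a \<in> lideal a"
  unfolding mem_lideal_iff by (metis mult_1_left)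

lemma rideal_eq_rideal_mult_inner_inverse:
  assumes axa: "a * x * a = a"
  shows "rideal a = rideal (a * x)"
proof (intro set_eqI iffI)
  fix y assume "y \<in> rideal a"
  then obtain z where "y = a * z" by (auto simp: mem_rideal_iff)
  then have "y = a * x * (a * z)" using axa by (metis mult.assoc)
  then show "y \<in> rideal (a * x)" by (auto simp: mem_rideal_iff)
next
  fix y assume "y \<in> rideal (a * x)"
  then obtain z where "y = a * (x * z)" by (auto simp: mem_rideal_iff mult.assoc)
  then show "y \<in> rideal a" by (auto simp: mem_rideal_iff)
qed

lemma is_core_inverseE:
  assumes "is_core_inverse s a x"
  obtains u v w where "a * x * a = a" "x = a * u" "a = x * v" "x = w * s a"
proof -
  have axa: "a * x * a = a" and r: "rideal x = rideal a" and l: "lideal x = lideal (s a)"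
    using assms by (simp_all add: is_core_inverse_def)
  obtain u where "x = a * u" using rideal_self[of x] unfolding r mem_rideal_iff by blast
  moreover obtain v where "a = x * v" using rideal_self[of a] unfolding r[symmetric] mem_rideal_iff by blast
  moreover obtain w where "x = w * s a" using lideal_self[of x] unfolding l mem_lideal_iff by blast
  ultimately show thesis using that axa by blast
qed

lemma core_inverse_mult_involution:
  assumes inv: "involution s" and ci: "is_core_inverse s a x"
  shows "x * s (a * x) = x"
proof -
  obtain w where axa: "a * x * a = a" and w: "x = w * s a"
    using ci by (rule is_core_inverseE)
  have "s a = s a * s (a * x)"
    using arg_cong[OF axa, of s] by (simp add: involution_mult[OF inv] mult.assoc)
  then show ?thesis using w by (metis mult.assoc)
qed

lemma core_inverse_hermitian:
  assumes inv: "involution s" and ci: "is_core_inverse s a x"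
  shows "s (a * x) = a * x"
proof -
  have q: "a * x = a * x * s (a * x)"
    using core_inverse_mult_involution[OF inv ci] by (metis mult.assoc)
  have "s (a * x) = s (a * x * s (a * x))" using q by simp
  also have "\<dots> = a * x * s (a * x)"
    by (simp only: involution_mult[OF inv] involution_involutive[OF inv])
  finally show ?thesis using q by simp
qed

lemma core_inverse_reflexive:
  assumes inv: "involution s" and ci: "is_core_inverse s a x"
  shows "x * a * x = x"
  using core_inverse_mult_involution[OF inv ci] core_inverse_hermitian[OF inv ci]
  by (simp add: mult.assoc)

lemma core_inverse_unique:
  assumes inv: "involution s" and cx: "is_core_inverse s a x" and cy: "is_core_inverse s a y"
  shows "x = y"
proof -
  obtain u where axa: "a * x * a = a" and u: "x = a * u" using cx by (rule is_core_inverseE)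
  obtain v where aya: "a * y * a = a" and v: "a = y * v" using cy by (rule is_core_inverseE)
  have "a * x = s (a * y * a * x)" using aya core_inverse_hermitian[OF inv cx] by simp
  also have "\<dots> = s (a * x) * s (a * y)" by (simp add: involution_mult[OF inv] mult.assoc)
  also have "\<dots> = a * x * a * y"
    using core_inverse_hermitian[OF inv cx] core_inverse_hermitian[OF inv cy] by (simp add: mult.assoc)
  finally have "a * x = a * y" using axa by simp
  have "y \<in> lideal x" using cx cy lideal_self[of y] by (simp add: is_core_inverse_def)
  then obtain t where t: "y = t * x" by (auto simp: mem_lideal_iff)
  have "y = t * (x * a * x)" using t core_inverse_reflexive[OF inv cx] by simp
  also have "\<dots> = y * a * x" using t by (simp add: mult.assoc)
  also have "\<dots> = y * a * y * v * u" using u v by (simp add: mult.assoc)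
  also have "\<dots> = x" using u v core_inverse_reflexive[OF inv cy] by simp
  finally show ?thesis by simp
qed

lemma is_core_inverse_core_inv:
  assumes inv: "involution s" and "core_invertible s a"
  shows "is_core_inverse s a (core_inv s a)"
proof -
  obtain x where x: "is_core_inverse s a x" using assms(2) by (auto simp: core_invertible_def)
  show ?thesis unfolding core_inv_def
    by (rule theI[of "is_core_inverse s a", OF x]) (erule core_inverse_unique[OF inv _ x])
qed

lemma core_le_projection:
  assumes inv: "involution s" and ci: "is_core_inverse s a x"
    and xa: "x * a = x * b" and ax: "a * x = b * x"
  defines "p \<equiv> a * x"
  shows "p * p = p \<and> p = s p \<and> a = p * b \<and> a * p = b * p \<and> rideal a = rideal p"
proof -
  obtain v where axa: "a * x * a = a" and v: "a = x * v" using ci by (rule is_core_inverseE)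
  have "p * p = (a * x * a) * x" by (simp add: p_def mult.assoc)
  then have "p * p = p" using axa by (simp add: p_def)
  moreover have "p * b = a"
  proof -
    have "p * b = a * (x * a)" using xa by (simp add: p_def mult.assoc)
    then show ?thesis using axa by (simp add: mult.assoc)
  qed
  moreover have "b * p = a * p"
  proof -
    have "b * p = b * x * v * x" using v by (simp add: p_def mult.assoc)
    also have "\<dots> = a * (x * v) * x" unfolding ax[symmetric] by (simp add: mult.assoc)
    finally show ?thesis using v by (simp add: p_def mult.assoc)
  qed
  ultimately show ?thesis
    using core_inverse_hermitian[OF inv ci] rideal_eq_rideal_mult_inner_inverse[OF axa]
    by (simp add: p_def)
qed

lemma projection_core_le:
  assumes inv: "involution s" and ci: "is_core_inverse s a x"
    and pp: "p * p = p" and sp: "p = s p" and apb: "a = p * b" and ap: "a * p = b * p"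
  shows "x * a = x * b \<and> a * x = b * x"
proof -
  obtain u w where u: "x = a * u" and w: "x = w * s a" using ci by (rule is_core_inverseE)
  have pa: "p * a = a" using apb pp by (simp add: mult.assoc[symmetric])
  have px: "p * x = x" using u pa by (simp add: mult.assoc[symmetric])
  have "s a = s b * p" using apb sp by (simp add: involution_mult[OF inv])
  then have sap: "s a * p = s a" using pp by (simp add: mult.assoc)
  have xp: "x * p = x" using w sap by (simp add: mult.assoc)
  have "x * a = x * b" using xp apb by (metis mult.assoc)
  moreover have "a * x = b * x" using px ap by (metis mult.assoc)
  ultimately show ?thesis ..
qed

lemma idempotent_peirce_iff:
  fixes a b p :: "'a::ring_1"
  assumes pp: "p * p = p"
  shows "(a = p * b \<and> a * p = b * p) \<longleftrightarrow>
         ((1 - p) * a * p = 0 \<and> (1 - p) * a * (1 - p) = 0 \<and>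
          p * b * p = p * a * p \<and> p * b * (1 - p) = p * a * (1 - p) \<and> (1 - p) * b * p = 0)"
proof
  assume "a = p * b \<and> a * p = b * p"
  then have apb: "a = p * b" and ap: "a * p = b * p" by blast+
  have pa: "p * a = a" using apb pp by (simp add: mult.assoc[symmetric])
  then have qa: "(1 - p) * a = 0" by (simp add: algebra_simps)
  have "p * b * p = p * a * p" using ap by (simp add: mult.assoc)
  moreover have "p * b * (1 - p) = p * a * (1 - p)" using apb pa by simp
  moreover have "(1 - p) * b * p = (1 - p) * a * p" using ap by (simp add: mult.assoc)
  ultimately show "(1 - p) * a * p = 0 \<and> (1 - p) * a * (1 - p) = 0 \<and>
          p * b * p = p * a * p \<and> p * b * (1 - p) = p * a * (1 - p) \<and> (1 - p) * b * p = 0"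
    using qa by simp
next
  assume h: "(1 - p) * a * p = 0 \<and> (1 - p) * a * (1 - p) = 0 \<and>
          p * b * p = p * a * p \<and> p * b * (1 - p) = p * a * (1 - p) \<and> (1 - p) * b * p = 0"
  have "(1 - p) * a = (1 - p) * a * p + (1 - p) * a * (1 - p)" by (simp add: algebra_simps)
  then have "(1 - p) * a = 0" using h by simp
  then have pa: "a = p * a" by (simp add: algebra_simps)
  have "p * b = p * b * p + p * b * (1 - p)" by (simp add: algebra_simps)
  also have "\<dots> = p * a * p + p * a * (1 - p)" using h by simp
  also have "\<dots> = p * a" by (simp add: algebra_simps)
  finally have "a = p * b" using pa by simp
  moreover have "b * p = p * b * p + (1 - p) * b * p" by (simp add: algebra_simps)
  then have "b * p = p * a * p + (1 - p) * a * p" using h by simp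
  then have "b * p = a * p" by (simp add: algebra_simps)
  ultimately show "a = p * b \<and> a * p = b * p" by simp
qed

theorem theorem2p4:
  fixes s :: "'a::ring_1 \<Rightarrow> 'a" and a b :: 'a
  assumes "involution s" and "core_invertible s a"
  shows "(core_le s a b \<longleftrightarrow>
           (\<exists>p. p * p = p \<and> p = s p \<and> a = p * b \<and> a * p = b * p \<and> rideal a = rideal p))
       \<and> (core_le s a b \<longleftrightarrow>
           (\<exists>p. p * p = p \<and> p = s p \<and> a = p * b \<and> a * p = b * p))
       \<and> (core_le s a b \<longleftrightarrow>
           (\<exists>p. p * p = p \<and> p = s p \<and>
              (1 - p) * a * p = 0 \<and> (1 - p) * a * (1 - p) = 0 \<and>
              p * b * p = p * a * p \<and> p * b * (1 - p) = p * a * (1 - p) \<and>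
              (1 - p) * b * p = 0))"
proof -
  have ci: "is_core_inverse s a (core_inv s a)"
    using is_core_inverse_core_inv[OF assms] .
  have 1: "core_le s a b \<Longrightarrow>
      \<exists>p. p * p = p \<and> p = s p \<and> a = p * b \<and> a * p = b * p \<and> rideal a = rideal p"
    using core_le_projection[OF assms(1) ci] by (auto simp: core_le_def)
  have 3: "(\<exists>p. p * p = p \<and> p = s p \<and> a = p * b \<and> a * p = b * p) \<Longrightarrow> core_le s a b"
    using projection_core_le[OF assms(1) ci] by (auto simp: core_le_def)
  show ?thesis using 1 3 idempotent_peirce_iff[of _ a b] by blast
qed

end
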